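(* Let $f\in{\rm elh}(\mathbb{C})$. If there exists $g\in{\rm elh}(\mathbb{C})$ such that $T_f(g)=T_f(f\circ g)$, then $f(\mathbb{C})=\mathbb{C}$.
   Context: ${\rm elh}(\mathbb{C})$ denotes the set of entire functions with nowhere vanishing derivative and derivative $1$ at $0$. For an entire function $h$, $T_f(h)$ (the subscript $f$ stands for "finite") is the set of all continuous $\gamma:[0,\infty)\to\mathbb{C}$ with $\lim_{t\to\infty}|\gamma(t)|=\infty$ such that $\lim_{t\to\infty}h(\gamma(t))$ exists and belongs to $\mathbb{C}$. *)

theory Defs
  imports "HOL-Complex_Analysis.Complex_Analysis"
begin

definition elh :: "(complex \<Rightarrow> complex) set" where
  "elh = {h. h holomorphic_on UNIV \<and> (\<forall>z. deriv h z \<noteq> 0) \<and> deriv h 0 = 1}"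

text \<open>Curves are functions real => complex; only their values on [0,infinity) matter,
  continuity is required on {0..}, limits are along t -> +infinity.\<close>
definition T_f :: "(complex \<Rightarrow> complex) \<Rightarrow> (real \<Rightarrow> complex) set" where
  "T_f h = {\<gamma>. continuous_on {0..} \<gamma>
              \<and> filterlim (\<lambda>t. norm (\<gamma> t)) at_top at_top
              \<and> (\<exists>L::complex. ((\<lambda>t. h (\<gamma> t)) \<longlongrightarrow> L) at_top)}"

end

theory Submission
  imports Defs
begin

text \<open>Suppose \<open>f\<close> omits a value \<open>a\<close>. Then so does \<open>h = f \<circ> g\<close>, which is nonconstant
  because \<open>h'(0) = f'(g 0) \<noteq> 0\<close>. By Iversen's theorem \<open>a\<close> is an asymptotic value of \<open>h\<close>:
  applying the maximum modulus principle to \<open>1 / (h - a)\<close> on components of its superlevel sets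
  yields a curve \<open>\<gamma>\<close> tending to \<open>\<infinity>\<close> with \<open>h \<circ> \<gamma> \<rightarrow> a\<close>. So \<open>\<gamma> \<in> T_f h = T_f g\<close>, i.e.
  \<open>g \<circ> \<gamma> \<rightarrow> L\<close> for some finite \<open>L\<close>, and continuity of \<open>f\<close> gives \<open>f L = a\<close>, a contradiction.\<close>

lemma frontier_superlevel_component:
  fixes w :: "'a::real_normed_vector \<Rightarrow> 'b::real_normed_vector"
  assumes "continuous_on UNIV w"
  shows "frontier (connected_component_set {z. n < norm (w z)} p) \<subseteq> {z. norm (w z) = n}"
proof -
  let ?U = "{z. n < norm (w z)}"
  have "open ?U" "closed {z. n \<le> norm (w z)}"
    by (intro open_Collect_less closed_Collect_le continuous_intros assms)+
  then have "closure ?U \<subseteq> {z. n \<le> norm (w z)}"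
    by (intro closure_minimal) auto
  with \<open>open ?U\<close> have "frontier ?U \<subseteq> {z. norm (w z) = n}"
    by (auto simp: frontier_def interior_open)
  then show ?thesis
    using frontier_of_connected_component_subset by blast
qed

text \<open>Maximum modulus for \<open>w z ^ k / (z - z1)\<close> on \<open>D \<inter> ball 0 R\<close>: on the frontier of \<open>D\<close>
  we have \<open>norm (w z) = n\<close>, and \<open>R\<close> is chosen so large that the bound \<open>M\<close> is harmless on the circle.\<close>
lemma superlevel_component_power_bound:
  fixes w :: "complex \<Rightarrow> complex"
  assumes holw: "w holomorphic_on UNIV"
    and D: "D = connected_component_set {z. n < norm (w z)} p"
    and bounded: "\<And>z. z \<in> D \<Longrightarrow> norm (w z) \<le> M"
    and r: "r > 0" and disj: "D \<inter> ball z1 r = {}"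
    and n: "n > 0" and q: "q \<in> D"
  shows "norm (w q) ^ k \<le> n ^ k * dist z1 q / r"
proof -
  have contw: "continuous_on UNIV w"
    by (simp add: holw holomorphic_on_imp_continuous_on)
  have qM: "n < norm (w q)" "norm (w q) \<le> M"
    using q bounded connected_component_subset by (auto simp: D)
  have clD_w: "closure D \<subseteq> {z. norm (w z) \<le> M}"
    by (intro closure_minimal closed_Collect_le continuous_intros contw) (use bounded in auto)
  have clD_z1: "closure D \<subseteq> - ball z1 r"
    using disj by (intro closure_minimal) auto
  have frD: "frontier D \<subseteq> {z. norm (w z) = n}"
    unfolding D by (rule frontier_superlevel_component[OF contw])
  define R where "R = norm z1 + norm q + 1 + M ^ k * r / n ^ k"
  define S where "S = D \<inter> ball 0 R"
  define F where "F = (\<lambda>z. w z ^ k / (z - z1))"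
  have holF: "F holomorphic_on closure D"
    using clD_z1 r unfolding F_def by (intro holomorphic_intros holomorphic_on_subset[OF holw]) auto
  have "0 \<le> M ^ k * r / n ^ k"
    using qM n r by simp
  then have Rq: "norm q < R" and RM: "norm z1 + M ^ k * r / n ^ k < R"
    using norm_ge_zero[of z1] norm_ge_zero[of q] unfolding R_def by linarith+
  have "norm (F q) \<le> n ^ k / r"
  proof (rule maximum_modulus_frontier[of F S])
    have "closure S \<subseteq> closure D" "interior S \<subseteq> closure D"
      using interior_subset closure_subset by (auto simp: S_def closure_mono)
    then show "F holomorphic_on interior S" "continuous_on (closure S) F"
      using holF by (auto intro: holomorphic_on_subset holomorphic_on_imp_continuous_on)
    show "bounded S" "q \<in> S"
      using q Rq by (auto simp: S_def)
  next
    fix z assume zS: "z \<in> frontier S"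
    then have "z \<in> closure D"
      using frontier_Int[of D "ball 0 R"] closure_mono[of S D] by (auto simp: S_def)
    then have dz: "r \<le> norm (z - z1)" and wz: "norm (w z) \<le> M"
      using clD_z1 clD_w by (auto simp: dist_norm norm_minus_commute)
    have "z \<in> frontier D \<or> norm z = R"
      using zS frontier_Int[of D "ball 0 R"] frontier_ball[of R 0] Rq
      by (auto simp: S_def dest: order.strict_trans1[OF norm_ge_zero])
    then show "norm (F z) \<le> n ^ k / r"
    proof
      assume "z \<in> frontier D"
      then have "norm (F z) = n ^ k / norm (z - z1)"
        using frD by (auto simp: F_def norm_divide norm_power)
      also have "\<dots> \<le> n ^ k / r"
        using dz r n by (intro divide_left_mono) (auto intro!: mult_pos_pos)
      finally show ?thesis .
    next
      assume "norm z = R"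
      then have far: "M ^ k * r / n ^ k \<le> norm (z - z1)"
        using norm_triangle_ineq2[of z z1] RM by linarith
      have "norm (F z) = norm (w z) ^ k / norm (z - z1)"
        by (simp add: F_def norm_divide norm_power)
      also have "\<dots> \<le> M ^ k / (M ^ k * r / n ^ k)"
        using wz far qM n r by (intro frac_le power_mono) auto
      also have "\<dots> = n ^ k / r"
        using qM n r by (simp add: field_simps)
      finally show ?thesis .
    qed
  qed
  moreover have "dist z1 q > 0"
    using q disj r by (auto simp: disjoint_iff)
  ultimately show ?thesis
    using r by (simp add: F_def norm_divide norm_power dist_norm norm_minus_commute field_simps)
qed

lemma superlevel_component_unbounded:
  fixes w :: "complex \<Rightarrow> complex"
  assumes holw: "w holomorphic_on UNIV"
    and z1: "norm (w z1) < n" and p: "n < norm (w p)"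
  shows "\<exists>q \<in> connected_component_set {z. n < norm (w z)} p. M < norm (w q)"
proof (rule ccontr)
  define D where "D = connected_component_set {z. n < norm (w z)} p"
  assume "\<not> (\<exists>q \<in> D. M < norm (w q))"
  then have bounded: "\<And>z. z \<in> D \<Longrightarrow> norm (w z) \<le> M"
    by (auto simp: D_def not_less)
  have "open {z. norm (w z) < n}"
    by (intro open_Collect_less continuous_intros holomorphic_on_imp_continuous_on holw)
  then obtain r where r: "r > 0" "ball z1 r \<subseteq> {z. norm (w z) < n}"
    using z1 by (meson mem_Collect_eq open_contains_ball)
  have disj: "D \<inter> ball z1 r = {}"
    using r connected_component_subset by (fastforce simp: D_def)
  have n: "n > 0" using z1 by (meson norm_ge_zero le_less_trans)
  have pD: "p \<in> D" using p by (simp add: D_def)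
  have "1 < norm (w p) / n" using p n by simp
  then obtain k where k: "dist z1 p / r < (norm (w p) / n) ^ k"
    using real_arch_pow by blast
  have "norm (w p) ^ k \<le> n ^ k * dist z1 p / r"
    using superlevel_component_power_bound[OF holw D_def bounded r(1) disj n pD] .
  with k n r show False by (simp add: field_simps power_divide)
qed

lemma continuous_on_path_chain:
  fixes P :: "nat \<Rightarrow> real \<Rightarrow> 'a::topological_space"
  assumes paths: "\<And>m. path (P m)"
    and joined: "\<And>m. pathfinish (P m) = pathstart (P (Suc m))"
  shows "continuous_on {0..} (\<lambda>t. P (nat \<lfloor>t\<rfloor>) (t - of_int \<lfloor>t\<rfloor>))"
    (is "continuous_on _ ?\<gamma>")
proof -
  have piece: "?\<gamma> t = P m (t - real m)" if "real m \<le> t" "t \<le> real m + 1" for m t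
  proof (cases "t = real m + 1")
    case True
    then have "?\<gamma> t = P (Suc m) 0" by (simp add: nat_add_distrib)
    also have "\<dots> = P m 1" using joined[of m] by (simp add: pathstart_def pathfinish_def)
    finally show ?thesis using True by simp
  next
    case False
    then have "\<lfloor>t\<rfloor> = int m" using that by (simp add: floor_eq_iff)
    then show ?thesis by simp
  qed
  have unit: "continuous_on {real m..real m + 1} ?\<gamma>" for m
  proof (rule continuous_on_eq)
    show "continuous_on {real m..real m + 1} (\<lambda>t. P m (t - real m))"
      using paths[of m] unfolding path_def
      by (rule continuous_on_compose2) (auto intro!: continuous_intros)
  qed (use piece in auto)
  have initial: "continuous_on {0..real N} ?\<gamma>" for N
  proof (induction N)
    case (Suc N)
    have "{0..real (Suc N)} = {0..real N} \<union> {real N..real N + 1}" by auto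
    then show ?case using continuous_on_closed_Un[OF _ _ Suc unit] by simp
  qed simp
  show ?thesis
    unfolding continuous_on_eq_continuous_within
  proof
    fix t :: real assume t: "t \<in> {0..}"
    define N where "N = nat \<lfloor>t\<rfloor> + 1"
    have "t < real N" using t by (simp add: N_def) linarith
    then have "at t within {0..} = at t within {0..real N}"
      by (intro at_within_nhd[of _ "{..<real N}"]) auto
    moreover have "continuous (at t within {0..real N}) ?\<gamma>"
      using initial[of N] t \<open>t < real N\<close> by (simp add: continuous_on_eq_continuous_within)
    ultimately show "continuous (at t within {0..}) ?\<gamma>" by simp
  qed
qed

text \<open>Iversen's construction: the component of \<open>{norm w > m + 1}\<close> through the current point
  reaches a point with \<open>norm w > m + 2\<close>, and the paths joining successive points in these
  open components are concatenated at integer times.\<close>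
lemma entire_curve_norm_exceeds_time:
  fixes w :: "complex \<Rightarrow> complex"
  assumes holw: "w holomorphic_on UNIV"
    and z1: "norm (w z1) < 1" and p0: "1 < norm (w p0)"
  shows "\<exists>\<gamma> :: real \<Rightarrow> complex. continuous_on {0..} \<gamma> \<and> (\<forall>t\<ge>0. t < norm (w (\<gamma> t)))"
proof -
  define U where "U = (\<lambda>m::nat. {z. real m + 1 < norm (w z)})"
  have openU: "open (U m)" for m
    unfolding U_def by (intro open_Collect_less continuous_intros holomorphic_on_imp_continuous_on holw)
  have "\<exists>q. real m + 1 < norm (w x) \<longrightarrow>
          q \<in> connected_component_set (U m) x \<and> real m + 2 < norm (w q)" for m x
    using superlevel_component_unbounded[OF holw, of z1 "real m + 1" x "real m + 2"] z1
    by (auto simp: U_def)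
  then obtain next_point where next_point: "\<And>m x. real m + 1 < norm (w x) \<Longrightarrow>
      next_point m x \<in> connected_component_set (U m) x \<and> real m + 2 < norm (w (next_point m x))"
    by metis
  define p where "p = rec_nat p0 next_point"
  have p_Suc: "p (Suc m) = next_point m (p m)" for m
    by (simp add: p_def)
  have p_large: "real m + 1 < norm (w (p m))" for m
  proof (induction m)
    case (Suc m)
    then show ?case using next_point[OF Suc] by (simp add: p_Suc add.commute)
  qed (use p0 in \<open>simp add: p_def\<close>)
  have "\<exists>g. path g \<and> path_image g \<subseteq> U m \<and> pathstart g = p m \<and> pathfinish g = p (Suc m)" for m
  proof -
    have "p (Suc m) \<in> path_component_set (U m) (p m)"
      using next_point[OF p_large[of m]] open_path_connected_component_set[OF openU] by (simp add: p_Suc)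
    then show ?thesis by (auto simp: path_component_def)
  qed
  then obtain P where P: "\<And>m. path (P m)" "\<And>m. path_image (P m) \<subseteq> U m"
     "\<And>m. pathstart (P m) = p m" "\<And>m. pathfinish (P m) = p (Suc m)"
    by metis
  define \<gamma> where "\<gamma> = (\<lambda>t. P (nat \<lfloor>t\<rfloor>) (t - of_int \<lfloor>t\<rfloor>))"
  have "continuous_on {0..} \<gamma>"
    unfolding \<gamma>_def by (rule continuous_on_path_chain) (simp_all add: P)
  moreover have "t < norm (w (\<gamma> t))" if "t \<ge> 0" for t
  proof -
    have "\<gamma> t \<in> path_image (P (nat \<lfloor>t\<rfloor>))"
      unfolding \<gamma>_def path_image_def by (intro imageI) (simp; linarith)
    then have "real (nat \<lfloor>t\<rfloor>) + 1 < norm (w (\<gamma> t))"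
      using P(2) by (auto simp: U_def)
    then show ?thesis using that by linarith
  qed
  ultimately show ?thesis by blast
qed

lemma filterlim_norm_at_top_of_continuous:
  fixes w :: "'a::euclidean_space \<Rightarrow> 'b::real_normed_vector"
  assumes "continuous_on UNIV w" and "filterlim (\<lambda>t. norm (w (\<gamma> t))) at_top F"
  shows "filterlim (\<lambda>t. norm (\<gamma> t)) at_top F"
  unfolding filterlim_at_top
proof
  fix Z :: real
  have "compact (w ` cball 0 Z)"
    by (intro compact_continuous_image continuous_on_subset[OF assms(1)]) auto
  then obtain B where B: "\<And>z. z \<in> cball 0 Z \<Longrightarrow> norm (w z) \<le> B"
    by (meson compact_imp_bounded bounded_iff imageI)
  have "eventually (\<lambda>t. B < norm (w (\<gamma> t))) F"
    using assms(2) by (simp add: filterlim_at_top_dense)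
  then show "eventually (\<lambda>t. Z \<le> norm (\<gamma> t)) F"
  proof eventually_elim
    case (elim t)
    then show ?case
      using B[of "\<gamma> t"] by (cases "norm (\<gamma> t) \<le> Z") auto
  qed
qed

lemma omitted_value_is_asymptotic:
  fixes h :: "complex \<Rightarrow> complex"
  assumes holh: "h holomorphic_on UNIV" and nonconst: "\<not> h constant_on UNIV"
    and a: "a \<notin> range h"
  shows "\<exists>\<gamma> :: real \<Rightarrow> complex. continuous_on {0..} \<gamma> \<and> filterlim (\<lambda>t. norm (\<gamma> t)) at_top at_top
             \<and> ((\<lambda>t. h (\<gamma> t)) \<longlongrightarrow> a) at_top"
proof -
  define w where "w = (\<lambda>z. inverse (h z - a))"
  have ha: "h z - a \<noteq> 0" for z using a by auto
  have holw: "w holomorphic_on UNIV"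
    unfolding w_def using ha by (intro holomorphic_intros holh) auto
  have h_eq: "h z = a + inverse (w z)" for z
    by (simp add: w_def)
  obtain z1 where z1: "norm (w z1) < 1"
  proof -
    have "\<not> bounded (range h)"
      using Liouville_theorem[OF holh] nonconst by blast
    then obtain z where "norm a + 1 < norm (h z)"
      unfolding bounded_iff by (auto simp: not_le)
    then have "1 < norm (h z - a)"
      using norm_triangle_ineq2[of "h z" a] by linarith
    then show ?thesis
      using that[of z] by (simp add: w_def norm_inverse inverse_less_1_iff)
  qed
  obtain p0 where p0: "1 < norm (w p0)"
  proof -
    have "\<not> w constant_on UNIV"
    proof
      assume "w constant_on UNIV"
      then obtain c where "\<And>z. w z = c" by (auto simp: constant_on_def)
      then have "h constant_on UNIV" by (auto simp: constant_on_def h_eq)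
      with nonconst show False ..
    qed
    then have "\<not> bounded (range w)"
      using Liouville_theorem[OF holw] by blast
    then show ?thesis
      using that unfolding bounded_iff by (auto simp: not_le)
  qed
  obtain \<gamma> where cont: "continuous_on {0..} \<gamma>" and big: "\<And>t. t \<ge> 0 \<Longrightarrow> t < norm (w (\<gamma> t))"
    using entire_curve_norm_exceeds_time[OF holw z1 p0] by blast
  have "filterlim (\<lambda>t. norm (w (\<gamma> t))) at_top at_top"
    by (rule filterlim_at_top_mono[OF filterlim_ident])
       (use big in \<open>auto intro: less_imp_le simp: eventually_at_top_linorder\<close>)
  then have "filterlim (\<lambda>t. w (\<gamma> t)) at_infinity at_top"
    by (rule filterlim_norm_at_top_imp_at_infinity)
  then have "((\<lambda>t. a + inverse (w (\<gamma> t))) \<longlongrightarrow> a + 0) at_top"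
    by (intro tendsto_intros filterlim_compose[OF tendsto_inverse_0])
  moreover have "filterlim (\<lambda>t. norm (\<gamma> t)) at_top at_top"
    by (rule filterlim_norm_at_top_of_continuous)
       (use holw \<open>filterlim (\<lambda>t. norm (w (\<gamma> t))) at_top at_top\<close> in
        \<open>auto intro: holomorphic_on_imp_continuous_on\<close>)
  ultimately show ?thesis
    using cont unfolding h_eq by auto
qed

lemma deriv_nonzero_imp_not_constant:
  assumes "deriv f z \<noteq> 0"
  shows "\<not> f constant_on UNIV"
  using assms by (auto simp: constant_on_def fun_eq_iff[symmetric])

lemma elh_comp_holomorphic_nonconstant:
  assumes "f \<in> elh" and "g \<in> elh"
  shows "(f \<circ> g) holomorphic_on UNIV" and "\<not> (f \<circ> g) constant_on UNIV"
proof -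
  have holf: "f holomorphic_on UNIV" and holg: "g holomorphic_on UNIV"
    using assms by (auto simp: elh_def)
  show "(f \<circ> g) holomorphic_on UNIV"
    by (rule holomorphic_on_compose[OF holg holomorphic_on_subset[OF holf]]) simp
  have "deriv (f \<circ> g) 0 = deriv f (g 0) * deriv g 0"
    using holf holg by (intro deriv_chain) (auto intro: holomorphic_on_imp_differentiable_at)
  also have "\<dots> \<noteq> 0"
    using assms by (simp add: elh_def)
  finally show "\<not> (f \<circ> g) constant_on UNIV"
    by (rule deriv_nonzero_imp_not_constant)
qed

theorem proposition3p10:
  fixes f :: "complex \<Rightarrow> complex"
  assumes "f \<in> elh"
    and "\<exists>g \<in> elh. T_f g = T_f (f \<circ> g)"
  shows "range f = UNIV"
proof (rule ccontr)
  assume "range f \<noteq> UNIV"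
  then obtain a where a: "a \<notin> range f" by auto
  obtain g where g: "g \<in> elh" and T: "T_f g = T_f (f \<circ> g)"
    using assms(2) by blast
  have "a \<notin> range (f \<circ> g)" using a by auto
  from omitted_value_is_asymptotic[OF elh_comp_holomorphic_nonconstant[OF assms(1) g] this]
  obtain \<gamma> :: "real \<Rightarrow> complex"
    where \<gamma>: "continuous_on {0..} \<gamma>" "filterlim (\<lambda>t. norm (\<gamma> t)) at_top at_top"
    and lim_a: "((\<lambda>t. f (g (\<gamma> t))) \<longlongrightarrow> a) at_top"
    by auto
  then have "\<gamma> \<in> T_f (f \<circ> g)" by (auto simp: T_f_def)
  then obtain L where "((\<lambda>t. g (\<gamma> t)) \<longlongrightarrow> L) at_top"
    using T by (auto simp: T_f_def)
  moreover have "continuous_on UNIV f"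
    using assms(1) by (auto simp: elh_def intro: holomorphic_on_imp_continuous_on)
  ultimately have "((\<lambda>t. f (g (\<gamma> t))) \<longlongrightarrow> f L) at_top"
    using continuous_on_tendsto_compose by fastforce
  with lim_a have "f L = a"
    using tendsto_unique[OF trivial_limit_at_top_linorder] by blast
  with a show False by auto
qed

end
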